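(* Let $k\ge1$ and let $\hat x,z,v\in\mathcal X$ be arbitrary. Run Prox-step$(\hat x,z,v,\gamma,\alpha,\zeta,\epsilon)$ with $$\gamma=\frac{3}{k+2},\quad \alpha=\frac{6\kappa L}{k+1},\quad \zeta=\frac{LD_{\mathcal X}^2}{384k(k+1)},\quad \epsilon=\frac{\kappa L D_{\mathcal X}^2}{k(k+1)(k+2)}.$$ Then the output $(x_R,y_R,v_R)$ satisfies $f(x_R,y_R)\ge\max_{y\in\mathcal Y}f(x_R,y)-\epsilon$.
   Context: Standing assumptions: $\mathcal X\subseteq\mathbb R^p$, $\mathcal Y\subseteq\mathbb R^q$ are nonempty convex compact sets with (Euclidean) diameters $D_{\mathcal X},D_{\mathcal Y}$. $f:\mathcal X\times\mathcal Y\to\mathbb R$ is continuously differentiable (on an open set containing $\mathcal X\times\mathcal Y$) and satisfies: (i) $L$-smoothness: $\|\nabla f(x_1,y_1)-\nabla f(x_2,y_2)\|^2\le L^2(\|x_1-x_2\|^2+\|y_1-y_2\|^2)$; (ii) $f(\cdot,y)$ convex for every $y$; (iii) $f(x,\cdot)$ $\mu$-strongly concave for every $x$, $\mu>0$. Set $\kappa=L/\mu$. Procedure CndG$(r,q,\beta,\eta,\Omega)$ (for a vector $r$, a point $q\in\Omega$, $\beta>0$, $\eta>0$, convex compact $\Omega$): set $q_1=q$; for $t=1,2,\dots$: let $p_t\in\arg\max_{x\in\Omega}\langle r+\beta(q_t-q),q_t-x\rangle$ and $\tau_t=\langle r+\beta(q_t-q),q_t-p_t\rangle$; if $\tau_t\le\eta$,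 return $q^+=q_t$; otherwise set $\theta_t=\min\{1,\tau_t/(\beta\|q_t-p_t\|^2)\}$ and $q_{t+1}=(1-\theta_t)q_t+\theta_t p_t$. (Its output satisfies $\max_{x\in\Omega}\langle r+\beta(q^+-q),q^+-x\rangle\le\eta$.) Procedure Prox-step$(\hat x,z,v,\gamma,\alpha,\zeta,\epsilon)$ with $\hat x,z,v\in\mathcal X$: set $\epsilon_{cgs}=\epsilon/(64\kappa)$, $\epsilon_{mp}=4\gamma\sqrt{2\kappa L\epsilon_{cgs}/\alpha^2+2\zeta/\alpha}$, $R=\lceil\log_2(4D_{\mathcal X}/\epsilon_{mp})\rceil$, $x_0=\hat x$. For $r=1,\dots,R$: choose any $y_r\in\mathcal Y$ with $f(x_{r-1},y_r)\ge\max_{y\in\mathcal Y}f(x_{r-1},y)-\epsilon_{cgs}$ (in the paper computed by the conditional gradient sliding method); set $v_r=\mathrm{CndG}(\nabla_x f(z,y_r),v,\alpha,\zeta,\mathcal X)$ and $x_r=(1-\gamma)\hat x+\gamma v_r$. Return $(x_R,y_R,v_R)$. *)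

theory Defs
  imports "HOL-Analysis.Analysis"
begin

definition strongly_concave_on :: "real \<Rightarrow> 'b::real_normed_vector set \<Rightarrow> ('b \<Rightarrow> real) \<Rightarrow> bool" where
  "strongly_concave_on \<mu> S g \<longleftrightarrow>
     (\<forall>y1\<in>S. \<forall>y2\<in>S. \<forall>t::real. 0 \<le> t \<and> t \<le> 1 \<longrightarrow>
        g ((1 - t) *\<^sub>R y1 + t *\<^sub>R y2) \<ge>
          (1 - t) * g y1 + t * g y2 + \<mu> / 2 * t * (1 - t) * (norm (y1 - y2))\<^sup>2)"

definition cndg_val :: "'a::real_inner \<Rightarrow> 'a \<Rightarrow> real \<Rightarrow> 'a \<Rightarrow> 'a \<Rightarrow> real" where
  "cndg_val r q \<beta> qt x = inner (r + \<beta> *\<^sub>R (qt - q)) (qt - x)"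

text \<open>out is a possible output of CndG(r,q,beta,eta,Omega): there is a terminating run
  q_1 = q, ..., q_T (with linear-oracle answers p_1, ..., p_T) following the rules of
  the procedure, and out = q_T.  The choice of p_t in the argmax is arbitrary.\<close>
definition cndg_output :: "'a::real_inner \<Rightarrow> 'a \<Rightarrow> real \<Rightarrow> real \<Rightarrow> 'a set \<Rightarrow> 'a \<Rightarrow> bool" where
  "cndg_output r q \<beta> \<eta> \<Omega> out \<longleftrightarrow>
     (\<exists>T::nat. \<exists>qs ps. T \<ge> 1 \<and> qs 1 = q \<and>
        (\<forall>t\<in>{1..T}. ps t \<in> \<Omega> \<and> (\<forall>x\<in>\<Omega>. cndg_val r q \<beta> (qs t) x \<le> cndg_val r q \<beta> (qs t) (ps t))) \<and>
        (\<forall>t\<in>{1..<T}. cndg_val r q \<beta> (qs t) (ps t) > \<eta> \<and>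
           (let \<tau> = cndg_val r q \<beta> (qs t) (ps t);
                \<theta> = min 1 (\<tau> / (\<beta> * (norm (qs t - ps t))\<^sup>2))
            in qs (Suc t) = (1 - \<theta>) *\<^sub>R qs t + \<theta> *\<^sub>R ps t)) \<and>
        cndg_val r q \<beta> (qs T) (ps T) \<le> \<eta> \<and>
        out = qs T)"

text \<open>out is a possible output (x_R, y_R, v_R) of Prox-step(xh,z,v,gamma,alpha,zeta,eps),
  where gx is the partial gradient of f in x, kappa = L / mu, and each y_r is any
  eps_cgs-approximate maximizer of f(x_{r-1}, .) over Y.  The procedure returns
  (x_R, y_R, v_R), which presupposes R >= 1.\<close>
definition prox_step_output ::
  "'a::euclidean_space set \<Rightarrow> 'b::euclidean_space set \<Rightarrow> ('a \<Rightarrow> 'b \<Rightarrow> real) \<Rightarrow> ('a \<Rightarrow> 'b \<Rightarrow> 'a)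
   \<Rightarrow> real \<Rightarrow> real \<Rightarrow> 'a \<Rightarrow> 'a \<Rightarrow> 'a \<Rightarrow> real \<Rightarrow> real \<Rightarrow> real \<Rightarrow> real \<Rightarrow> 'a \<times> 'b \<times> 'a \<Rightarrow> bool" where
  "prox_step_output X Y f gx L \<mu> xh z v \<gamma> \<alpha> \<zeta> \<epsilon> out \<longleftrightarrow>
     (let \<kappa> = L / \<mu>;
          ecgs = \<epsilon> / (64 * \<kappa>);
          emp = 4 * \<gamma> * sqrt (2 * \<kappa> * L * ecgs / \<alpha>\<^sup>2 + 2 * \<zeta> / \<alpha>);
          R = nat \<lceil>log 2 (4 * diameter X / emp)\<rceil>
      in R \<ge> 1 \<and>
         (\<exists>xs ys vs. xs 0 = xh \<and>
            (\<forall>r\<in>{1..R}.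
               ys r \<in> Y \<and> f (xs (r - 1)) (ys r) \<ge> (SUP y\<in>Y. f (xs (r - 1)) y) - ecgs \<and>
               cndg_output (gx z (ys r)) v \<alpha> \<zeta> X (vs r) \<and>
               xs r = (1 - \<gamma>) *\<^sub>R xh + \<gamma> *\<^sub>R vs r) \<and>
            out = (xs R, ys R, vs R)))"

end

theory Submission
  imports Defs
begin

text \<open>Let \<open>y\<^sup>*(x)\<close> maximize the \<open>\<mu>\<close>-strongly concave function \<open>f x\<close> over \<open>Y\<close>. Quadratic
  growth around \<open>y\<^sup>*(x)\<close>, combined with the \<open>L\<close>-Lipschitz mixed differences of \<open>f\<close>, makes
  \<open>y\<^sup>*\<close> \<open>\<kappa>\<close>-Lipschitz, puts every \<open>e\<close>-maximizer for \<open>x\<close> within \<open>\<surd>(2e/\<mu>)\<close> of \<open>y\<^sup>*(x)\<close>,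
  and keeps it a \<open>(6e + 3\<kappa>L\<delta>\<^sup>2/5)\<close>-maximizer for every \<open>x'\<close> at distance \<open>\<delta>\<close> from \<open>x\<close>.
  In Prox-step, \<open>y\<^sub>r\<close> is an \<open>\<epsilon>\<^sub>c\<^sub>g\<^sub>s\<close>-maximizer for \<open>x\<^sub>r\<^sub>-\<^sub>1\<close>, and CndG outputs depend
  \<open>(1/\<alpha>)\<close>-Lipschitz on the linear term up to \<open>\<surd>(2\<zeta>/\<alpha>)\<close>; hence the moves
  \<open>\<parallel>x\<^sub>r\<^sub>+\<^sub>1 - x\<^sub>r\<parallel>\<close> shrink by the factor \<open>\<gamma>L\<kappa>/\<alpha> \<le> 1/2\<close> up to an additive term, and
  after \<open>R\<close> rounds the last move is small enough for \<open>y\<^sub>R\<close> to be an \<open>\<epsilon>\<close>-maximizer for \<open>x\<^sub>R\<close>.\<close>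

lemma has_real_derivative_along_line:
  fixes F :: "'a::real_normed_vector \<Rightarrow> 'b::real_normed_vector \<Rightarrow> real"
  assumes "((\<lambda>(a, b). F a b) has_derivative (\<lambda>(h, l). G h + H l)) (at (p + t *\<^sub>R dp, q + t *\<^sub>R dq))"
    and "linear G" "linear H"
  shows "((\<lambda>s. F (p + s *\<^sub>R dp) (q + s *\<^sub>R dq)) has_real_derivative (G dp + H dq)) (at t)"
proof -
  have line: "((\<lambda>s. (p + s *\<^sub>R dp, q + s *\<^sub>R dq)) has_derivative (\<lambda>s. (s *\<^sub>R dp, s *\<^sub>R dq))) (at t)"
    by (auto intro!: derivative_eq_intros)
  have "(\<lambda>s. (\<lambda>(h, l). G h + H l) (s *\<^sub>R dp, s *\<^sub>R dq)) = (*) (G dp + H dq)"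
    using assms(2,3) by (auto simp: fun_eq_iff algebra_simps linear_scale)
  then show ?thesis
    using has_derivative_compose[OF line assms(1)] by (simp add: o_def has_field_derivative_def)
qed

lemma strongly_concave_on_quadratic_growth:
  fixes g :: "'b::real_normed_vector \<Rightarrow> real"
  assumes "strongly_concave_on \<mu> S g" "convex S" "y0 \<in> S" "y \<in> S"
    and max: "\<And>y'. y' \<in> S \<Longrightarrow> g y' \<le> g y0"
  shows "\<mu> / 2 * (norm (y - y0))\<^sup>2 \<le> g y0 - g y"
proof -
  define A where "A = g y0 - g y"
  define B where "B = \<mu> / 2 * (norm (y - y0))\<^sup>2"
  have "A \<ge> 0" using max assms(4) unfolding A_def by auto
  have shrink: "B - B * t \<le> A" if t: "0 < t" "t \<le> 1" for t
  proof -
    have "(1 - t) * g y0 + t * g y + \<mu> / 2 * t * (1 - t) * (norm (y0 - y))\<^sup>2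
        \<le> g ((1 - t) *\<^sub>R y0 + t *\<^sub>R y)"
      using assms(1,3,4) t unfolding strongly_concave_on_def by auto
    also have "\<dots> \<le> g y0"
      using max convexD_alt[OF assms(2,3,4)] t by auto
    finally have "t * (B - B * t) \<le> t * A"
      unfolding A_def B_def by (simp add: norm_minus_commute algebra_simps) (simp add: field_simps)
    then show ?thesis using t by simp
  qed
  show ?thesis
  proof (rule ccontr)
    assume "\<not> ?thesis"
    then have "B > A" unfolding A_def B_def by simp
    then have "B - B * ((B - A) / (2 * B)) \<le> A"
      using \<open>A \<ge> 0\<close> by (intro shrink) auto
    then show False using \<open>B > A\<close> \<open>A \<ge> 0\<close> by (simp add: field_simps)
  qed
qed

lemma le_of_quadratic_le:
  fixes u G \<alpha> \<zeta> :: real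
  assumes "\<alpha> > 0" "\<zeta> \<ge> 0" "u \<ge> 0" "G \<ge> 0" "\<alpha> * u\<^sup>2 \<le> 2 * \<zeta> + G * u"
  shows "u \<le> G / \<alpha> + sqrt (2 * \<zeta> / \<alpha>)"
proof (rule ccontr)
  define c where "c = sqrt (2 * \<zeta> / \<alpha>)"
  have "c \<ge> 0" and cc: "c * c = 2 * \<zeta> / \<alpha>"
    using assms unfolding c_def by auto
  assume "\<not> ?thesis"
  then have gt: "u - G / \<alpha> > c" unfolding c_def by simp
  moreover have "u > c" using gt assms(1,4) by (smt (verit) divide_nonneg_pos)
  ultimately have "u * (u - G / \<alpha>) > c * c"
    using \<open>c \<ge> 0\<close> by (simp add: mult_strict_mono)
  then have "\<alpha> * (u * (u - G / \<alpha>)) > \<alpha> * (c * c)" using assms(1) by simp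
  then show False using assms(1,5) cc by (simp add: algebra_simps power2_eq_square)
qed

lemma mult_le_young:
  fixes a b t :: real
  assumes "t > 0"
  shows "a * b \<le> a\<^sup>2 / (2 * t) + t * b\<^sup>2 / 2"
proof -
  have "0 \<le> (a - t * b)\<^sup>2 / (2 * t)" using assms by simp
  then show ?thesis using assms by (simp add: power2_eq_square field_simps)
qed

lemma geometric_recursion_bound:
  fixes d :: "nat \<Rightarrow> real"
  assumes rec: "\<And>r. 1 \<le> r \<Longrightarrow> r < R \<Longrightarrow> d (Suc r) \<le> \<rho> * d r + B"
    and "d 1 \<le> D" "0 \<le> \<rho>" "\<rho> < 1" "B \<ge> 0" "1 \<le> R"
  shows "d R \<le> \<rho> ^ (R - 1) * D + B / (1 - \<rho>)"
  using \<open>1 \<le> R\<close>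
proof (induction R rule: dec_induct)
  case base
  have "B / (1 - \<rho>) \<ge> 0" using assms(4,5) by simp
  then show ?case using assms(2) by simp
next
  case (step r)
  have "d (Suc r) \<le> \<rho> * d r + B" using rec step.hyps by auto
  also have "\<dots> \<le> \<rho> * (\<rho> ^ (r - 1) * D + B / (1 - \<rho>)) + B"
    using step.IH assms(3) by (simp add: mult_left_mono)
  also have "\<dots> = \<rho> ^ (Suc r - 1) * D + B / (1 - \<rho>)"
    using step.hyps assms(4) by (cases r) (auto simp: field_simps)
  finally show ?case .
qed

lemma two_power_ceiling_log_ge:
  assumes "a > 0"
  shows "a \<le> 2 ^ nat \<lceil>log 2 a\<rceil>"
proof -
  have "a = 2 powr log 2 a" using assms by simp
  also have "\<dots> \<le> 2 powr real (nat \<lceil>log 2 a\<rceil>)" by (simp add: real_nat_ceiling_ge)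
  finally show ?thesis by (simp add: powr_realpow)
qed

lemma half_power_ceiling_log_le:
  fixes D E :: real
  assumes "D \<ge> 0" "E > 0" "1 \<le> R" "R = nat \<lceil>log 2 (4 * D / E)\<rceil>"
  shows "(1/2) ^ (R - 1) * D \<le> E / 2"
proof (cases "D = 0")
  case False
  then have "D > 0" using assms(1) by simp
  then have "4 * D / E \<le> 2 ^ R"
    unfolding assms(4) using assms(2) by (intro two_power_ceiling_log_ge) simp
  then have "2 * D / 2 ^ R \<le> 2 * D / (4 * D / E)"
    using \<open>D > 0\<close> assms(2) by (intro divide_left_mono) auto
  moreover have "(1/2) ^ (R - 1) * D = 2 * D / 2 ^ R"
    using assms(3) by (cases R) (auto simp: power_divide)
  ultimately show ?thesis using \<open>D > 0\<close> assms(2) by (simp add: field_simps)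
qed (use assms(2) in simp)

lemma strongly_concave_on_midpoint:
  assumes "strongly_concave_on \<mu> S g" "y1 \<in> S" "y2 \<in> S"
  shows "(g y1 + g y2) / 2 + \<mu> * (norm (y1 - y2))\<^sup>2 / 8 \<le> g ((1/2) *\<^sub>R (y1 + y2))"
proof -
  have "\<forall>t. 0 \<le> t \<and> t \<le> 1 \<longrightarrow> (1 - t) * g y1 + t * g y2 + \<mu> / 2 * t * (1 - t) * (norm (y1 - y2))\<^sup>2
      \<le> g ((1 - t) *\<^sub>R y1 + t *\<^sub>R y2)"
    using assms unfolding strongly_concave_on_def by blast
  then have "(1 - 1/2) * g y1 + 1/2 * g y2 + \<mu> / 2 * (1/2) * (1 - 1/2) * (norm (y1 - y2))\<^sup>2
      \<le> g ((1 - 1/2) *\<^sub>R y1 + (1/2) *\<^sub>R y2)"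
    by (rule allE[of _ "1/2"]) simp
  then show ?thesis by (simp add: scaleR_add_right add_divide_distrib)
qed

lemma cndg_output_mem:
  fixes \<Omega> :: "'a::real_inner set"
  assumes "cndg_output r q \<beta> \<eta> \<Omega> out" "convex \<Omega>" "q \<in> \<Omega>" "\<beta> > 0" "\<eta> > 0"
  shows "out \<in> \<Omega>" and "\<And>x. x \<in> \<Omega> \<Longrightarrow> cndg_val r q \<beta> out x \<le> \<eta>"
proof -
  obtain T qs ps where T: "T \<ge> 1" "qs 1 = q"
    and lmo: "\<forall>t\<in>{1..T}. ps t \<in> \<Omega> \<and>
        (\<forall>x\<in>\<Omega>. cndg_val r q \<beta> (qs t) x \<le> cndg_val r q \<beta> (qs t) (ps t))"
    and update: "\<forall>t\<in>{1..<T}. cndg_val r q \<beta> (qs t) (ps t) > \<eta> \<and>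
        (let \<tau> = cndg_val r q \<beta> (qs t) (ps t);
             \<theta> = min 1 (\<tau> / (\<beta> * (norm (qs t - ps t))\<^sup>2))
         in qs (Suc t) = (1 - \<theta>) *\<^sub>R qs t + \<theta> *\<^sub>R ps t)"
    and stop: "cndg_val r q \<beta> (qs T) (ps T) \<le> \<eta>" "out = qs T"
    using assms(1) unfolding cndg_output_def by blast
  have "qs t \<in> \<Omega>" if "1 \<le> t" "t \<le> T" for t
    using that
  proof (induction t rule: dec_induct)
    case base
    then show ?case using T assms(3) by simp
  next
    case (step t)
    define \<tau> where "\<tau> = cndg_val r q \<beta> (qs t) (ps t)"
    define \<theta> where "\<theta> = min 1 (\<tau> / (\<beta> * (norm (qs t - ps t))\<^sup>2))"
    have "\<tau> > \<eta>" and next_eq: "qs (Suc t) = (1 - \<theta>) *\<^sub>R qs t + \<theta> *\<^sub>R ps t"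
      using update step.hyps that(2) unfolding \<tau>_def \<theta>_def Let_def by auto
    then have "0 \<le> \<theta>" "\<theta> \<le> 1" unfolding \<theta>_def using assms(4,5) by auto
    moreover have "ps t \<in> \<Omega>" using lmo step.hyps that(2) by auto
    ultimately show ?case
      using next_eq convexD_alt[OF assms(2)] step by simp
  qed
  then show "out \<in> \<Omega>" using T stop by simp
  show "cndg_val r q \<beta> out x \<le> \<eta>" if "x \<in> \<Omega>" for x
    using lmo T stop that by force
qed

text \<open>Adding the two variational inequalities (each tested at the other output) makes the
  prox terms produce \<open>\<beta> \<parallel>o\<^sub>1 - o\<^sub>2\<parallel>\<^sup>2\<close>.\<close>
lemma cndg_outputs_close:
  fixes \<Omega> :: "'a::real_inner set"
  assumes "cndg_output r1 q \<beta> \<eta> \<Omega> o1" "cndg_output r2 q \<beta> \<eta> \<Omega> o2"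
    and "convex \<Omega>" "q \<in> \<Omega>" "\<beta> > 0" "\<eta> > 0"
  shows "norm (o1 - o2) \<le> norm (r1 - r2) / \<beta> + sqrt (2 * \<eta> / \<beta>)"
proof -
  note o1 = cndg_output_mem[OF assms(1,3-6)] and o2 = cndg_output_mem[OF assms(2,3-6)]
  define w where "w = o1 - o2"
  have "inner (r1 + \<beta> *\<^sub>R (o1 - q)) w \<le> \<eta>" "inner (r2 + \<beta> *\<^sub>R (o2 - q)) (- w) \<le> \<eta>"
    using o1(2)[OF o2(1)] o2(2)[OF o1(1)] unfolding cndg_val_def w_def by auto
  moreover have "inner (r1 + \<beta> *\<^sub>R (o1 - q)) w + inner (r2 + \<beta> *\<^sub>R (o2 - q)) (- w)
      = inner (r1 - r2) w + \<beta> * (norm w)\<^sup>2"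
    unfolding w_def by (simp add: algebra_simps power2_norm_eq_inner)
  moreover have "- (norm (r1 - r2) * norm w) \<le> inner (r1 - r2) w"
    using Cauchy_Schwarz_ineq2[of "r1 - r2" w] by linarith
  ultimately have "\<beta> * (norm w)\<^sup>2 \<le> 2 * \<eta> + norm (r1 - r2) * norm w"
    by linarith
  then show ?thesis
    unfolding w_def using le_of_quadratic_le assms(5,6) by simp
qed

lemma last_move_sq_le:
  fixes \<gamma> a M :: real
  assumes "\<gamma> \<ge> 0" "0 \<le> a" "a \<le> sqrt M" "M \<ge> 0"
  shows "(2 * \<gamma> * sqrt (a\<^sup>2 + (sqrt M)\<^sup>2) + 2 * \<gamma> * (2 * a + sqrt M))\<^sup>2 \<le> 81 * \<gamma>\<^sup>2 * M"
proof -
  define m where "m = sqrt M"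
  have "m \<ge> 0" unfolding m_def using assms(4) by simp
  have "a\<^sup>2 \<le> m\<^sup>2" using assms(2,3) unfolding m_def by (simp add: power_mono)
  then have "sqrt (a\<^sup>2 + m\<^sup>2) \<le> sqrt (2 * m\<^sup>2)" by simp
  also have "\<dots> = sqrt 2 * m" using \<open>m \<ge> 0\<close> by (simp add: real_sqrt_mult)
  also have "\<dots> \<le> 3/2 * m"
  proof -
    have "sqrt 2 \<le> (3/2 :: real)" by (rule real_le_lsqrt) (auto simp: power2_eq_square)
    then show ?thesis using \<open>m \<ge> 0\<close> by (intro mult_right_mono) auto
  qed
  finally have "\<gamma> * (2 * sqrt (a\<^sup>2 + m\<^sup>2) + 2 * (2 * a + m)) \<le> \<gamma> * (9 * m)"
    using assms(1,3) unfolding m_def by (intro mult_left_mono) auto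
  then have "2 * \<gamma> * sqrt (a\<^sup>2 + m\<^sup>2) + 2 * \<gamma> * (2 * a + m) \<le> 9 * \<gamma> * m"
    by (simp add: algebra_simps)
  moreover have "0 \<le> 2 * \<gamma> * sqrt (a\<^sup>2 + m\<^sup>2) + 2 * \<gamma> * (2 * a + m)"
    using assms(1,2) \<open>m \<ge> 0\<close> by simp
  ultimately have "(2 * \<gamma> * sqrt (a\<^sup>2 + m\<^sup>2) + 2 * \<gamma> * (2 * a + m))\<^sup>2 \<le> (9 * \<gamma> * m)\<^sup>2"
    by (intro power_mono)
  also have "\<dots> = 81 * \<gamma>\<^sup>2 * M"
    unfolding m_def using assms(4) by (simp add: power_mult_distrib)
  finally show ?thesis unfolding m_def .
qed

lemma prox_step_parameters_gap_le:
  fixes K \<kappa> L D \<gamma> \<alpha> \<zeta> \<epsilon> e a c :: real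
  assumes "K \<ge> 1" "\<kappa> \<ge> 1/2" "L > 0"
    and \<gamma>: "\<gamma> = 3 / (K + 2)" and \<alpha>: "\<alpha> = 6 * \<kappa> * L / (K + 1)"
    and \<zeta>: "\<zeta> = L * D\<^sup>2 / (384 * K * (K + 1))"
    and \<epsilon>: "\<epsilon> = \<kappa> * L * D\<^sup>2 / (K * (K + 1) * (K + 2))" and e: "e = \<epsilon> / (64 * \<kappa>)"
    and a: "a = sqrt (2 * \<kappa> * L * e / \<alpha>\<^sup>2)" and c: "c = sqrt (2 * \<zeta> / \<alpha>)"
  shows "6 * e + 3/5 * (\<kappa> * L * (2 * \<gamma> * sqrt (a\<^sup>2 + c\<^sup>2) + 2 * \<gamma> * (2 * a + c))\<^sup>2) \<le> \<epsilon>"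
proof -
  define M where "M = D\<^sup>2 / (1152 * \<kappa> * K)"
  define m where "m = sqrt M"
  have pos: "K > 0" "K + 1 > 0" "K + 2 > 0" "\<kappa> > 0" "\<gamma> > 0" using assms(1,2) \<gamma> by auto
  then have "M \<ge> 0" unfolding M_def by simp
  \<comment> \<open>The identities are stated for atoms \<open>A\<close>, \<open>B\<close> in place of \<open>K + 1\<close>, \<open>K + 2\<close>, so that
    \<open>field_simps\<close> does not multiply them out.\<close>
  have "2 * \<kappa> * L * (\<kappa> * L * D\<^sup>2 / (K * A * B) / (64 * \<kappa>)) / (6 * \<kappa> * L / A)\<^sup>2 = M * (A / B)"
    if "A > 0" "B > 0" for A B
    unfolding M_def using pos assms(3) that by (simp add: field_simps power2_eq_square)
  then have "2 * \<kappa> * L * e / \<alpha>\<^sup>2 = M * ((K + 1) / (K + 2))"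
    unfolding e \<epsilon> \<alpha> using pos by (simp only: mult.assoc)
  moreover have "M * ((K + 1) / (K + 2)) \<le> M"
    using \<open>M \<ge> 0\<close> pos by (intro mult_left_le) auto
  ultimately have "a \<le> m" "a \<ge> 0"
    unfolding a m_def using \<open>M \<ge> 0\<close> pos by auto
  have "2 * (L * D\<^sup>2 / (384 * K * A)) / (6 * \<kappa> * L / A) = M" if "A > 0" for A
    unfolding M_def using pos assms(3) that by (simp add: field_simps power2_eq_square)
  then have "2 * \<zeta> / \<alpha> = M"
    unfolding \<zeta> \<alpha> using pos by (simp only: mult.assoc)
  then have "c = m" unfolding c m_def by simp
  then have "(2 * \<gamma> * sqrt (a\<^sup>2 + c\<^sup>2) + 2 * \<gamma> * (2 * a + c))\<^sup>2 \<le> 81 * \<gamma>\<^sup>2 * M"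
    using last_move_sq_le[of \<gamma> a M] \<open>a \<le> m\<close> \<open>a \<ge> 0\<close> \<open>M \<ge> 0\<close> pos unfolding m_def by simp
  then have "6 * e + 3/5 * (\<kappa> * L * (2 * \<gamma> * sqrt (a\<^sup>2 + c\<^sup>2) + 2 * \<gamma> * (2 * a + c))\<^sup>2)
      \<le> 6 * e + 3/5 * (\<kappa> * L * (81 * \<gamma>\<^sup>2 * M))"
    using pos assms(3) by (intro add_left_mono mult_left_mono) auto
  also have "\<dots> = L * D\<^sup>2 / (K * (K + 1) * (K + 2)\<^sup>2) * (6 * (K + 2) / 64 + 2187 / 5760 * (K + 1))"
  proof -
    have "6 * (\<kappa> * L * D\<^sup>2 / (K * A * B) / (64 * \<kappa>)) + 3/5 * (\<kappa> * L * (81 * (3 / B)\<^sup>2 * (D\<^sup>2 / (1152 * \<kappa> * K))))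
        = L * D\<^sup>2 / (K * A * B\<^sup>2) * (6 * B / 64 + 2187 / 5760 * A)" if "A > 0" "B > 0" for A B
      using pos that by (simp add: field_simps power2_eq_square)
    then show ?thesis unfolding e \<epsilon> \<gamma> M_def using pos by blast
  qed
  also have "\<dots> \<le> L * D\<^sup>2 / (K * (K + 1) * (K + 2)\<^sup>2) * (\<kappa> * (K + 2))"
  proof -
    have "6 * (K + 2) / 64 + 2187 / 5760 * (K + 1) \<le> 1/2 * (K + 2)" using pos by (simp add: field_simps)
    also have "\<dots> \<le> \<kappa> * (K + 2)" using assms(2) pos by (intro mult_right_mono) auto
    finally show ?thesis using pos assms(3) by (intro mult_left_mono) auto
  qed
  also have "\<dots> = \<epsilon>"
  proof -
    have "L * D\<^sup>2 / (K * A * B\<^sup>2) * (\<kappa> * B) = \<kappa> * L * D\<^sup>2 / (K * A * B)" if "A > 0" "B > 0" for A B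
      using that by (simp add: field_simps power2_eq_square)
    then show ?thesis unfolding \<epsilon> using pos by blast
  qed
  finally show ?thesis .
qed

lemma prox_step_output_y_mem:
  assumes "prox_step_output X Y f gx L \<mu> xh z v \<gamma> \<alpha> \<zeta> \<epsilon> (xR, yR, vR)"
  shows "yR \<in> Y"
  using assms unfolding prox_step_output_def Let_def by auto

text \<open>Since \<open>log 2 0 = 0\<close>, a degenerate \<open>X\<close> would give \<open>R = 0\<close> rounds.\<close>
lemma prox_step_output_diameter_nonzero:
  assumes "prox_step_output X Y f gx L \<mu> xh z v \<gamma> \<alpha> \<zeta> \<epsilon> out"
  shows "diameter X \<noteq> 0"
proof
  assume "diameter X = 0"
  then have rounds: "nat \<lceil>log 2 (4 * diameter X / E)\<rceil> = 0" for E
    by (simp add: log_def)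
  show False
    using assms unfolding prox_step_output_def Let_def rounds by simp
qed

lemma prox_step_output_iterates:
  assumes run: "prox_step_output X Y f gx L \<mu> xh z v \<gamma> \<alpha> \<zeta> \<epsilon> (xR, yR, vR)"
    and "convex X" "xh \<in> X" "v \<in> X" "0 < \<gamma>" "\<gamma> \<le> 1" "\<alpha> > 0" "\<zeta> > 0"
  obtains R xs ys vs
  where "R = nat \<lceil>log 2 (4 * diameter X / (4 * \<gamma> *
      sqrt (2 * (L / \<mu>) * L * (\<epsilon> / (64 * (L / \<mu>))) / \<alpha>\<^sup>2 + 2 * \<zeta> / \<alpha>)))\<rceil>"
    and "1 \<le> R" "xR = xs R" "yR = ys R"
    and "\<And>r. 1 \<le> r \<Longrightarrow> r \<le> R \<Longrightarrow> ys r \<in> Y"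
    and "\<And>r. 1 \<le> r \<Longrightarrow> r \<le> R \<Longrightarrow>
      f (xs (r - 1)) (ys r) \<ge> (SUP y\<in>Y. f (xs (r - 1)) y) - \<epsilon> / (64 * (L / \<mu>))"
    and "\<And>r. 1 \<le> r \<Longrightarrow> r \<le> R \<Longrightarrow> cndg_output (gx z (ys r)) v \<alpha> \<zeta> X (vs r)"
    and "\<And>r. 1 \<le> r \<Longrightarrow> r \<le> R \<Longrightarrow> xs r = (1 - \<gamma>) *\<^sub>R xh + \<gamma> *\<^sub>R vs r"
    and "\<And>r. r \<le> R \<Longrightarrow> xs r \<in> X"
proof -
  obtain R xs ys vs
    where R: "R = nat \<lceil>log 2 (4 * diameter X / (4 * \<gamma> *
      sqrt (2 * (L / \<mu>) * L * (\<epsilon> / (64 * (L / \<mu>))) / \<alpha>\<^sup>2 + 2 * \<zeta> / \<alpha>)))\<rceil>" "1 \<le> R"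
    and x0: "xs 0 = xh"
    and steps: "\<forall>r\<in>{1..R}. ys r \<in> Y \<and>
        f (xs (r - 1)) (ys r) \<ge> (SUP y\<in>Y. f (xs (r - 1)) y) - \<epsilon> / (64 * (L / \<mu>)) \<and>
        cndg_output (gx z (ys r)) v \<alpha> \<zeta> X (vs r) \<and> xs r = (1 - \<gamma>) *\<^sub>R xh + \<gamma> *\<^sub>R vs r"
    and out: "xR = xs R" "yR = ys R"
    using run unfolding prox_step_output_def Let_def by blast
  have xs_mem: "xs r \<in> X" if "r \<le> R" for r
  proof (cases "r = 0")
    case True
    then show ?thesis using x0 \<open>xh \<in> X\<close> by simp
  next
    case False
    then have "cndg_output (gx z (ys r)) v \<alpha> \<zeta> X (vs r)" "xs r = (1 - \<gamma>) *\<^sub>R xh + \<gamma> *\<^sub>R vs r"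
      using steps that by auto
    then have "vs r \<in> X" "xs r = (1 - \<gamma>) *\<^sub>R xh + \<gamma> *\<^sub>R vs r"
      using cndg_output_mem(1)[OF _ \<open>convex X\<close> \<open>v \<in> X\<close> \<open>\<alpha> > 0\<close> \<open>\<zeta> > 0\<close>] by blast+
    then show ?thesis
      using convexD_alt[OF \<open>convex X\<close> \<open>xh \<in> X\<close>] \<open>0 < \<gamma>\<close> \<open>\<gamma> \<le> 1\<close> by simp
  qed
  show thesis
    by (rule that[of R xs ys vs]) (use R out steps xs_mem in auto)
qed

locale smooth_strongly_concave =
  fixes X :: "'a::euclidean_space set" and Y :: "'b::euclidean_space set"
    and f :: "'a \<Rightarrow> 'b \<Rightarrow> real" and gx :: "'a \<Rightarrow> 'b \<Rightarrow> 'a" and gy :: "'a \<Rightarrow> 'b \<Rightarrow> 'b"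
    and L \<mu> :: real
  assumes convex_X: "convex X"
    and convex_Y: "convex Y" and compact_Y: "compact Y" and nonempty_Y: "Y \<noteq> {}"
    and gradient: "\<And>x y. x \<in> X \<Longrightarrow> y \<in> Y \<Longrightarrow>
        ((\<lambda>(a, b). f a b) has_derivative (\<lambda>(h, l). inner (gx x y) h + inner (gy x y) l)) (at (x, y))"
    and L_pos: "L > 0"
    and smooth: "\<And>x1 y1 x2 y2. x1 \<in> X \<Longrightarrow> y1 \<in> Y \<Longrightarrow> x2 \<in> X \<Longrightarrow> y2 \<in> Y \<Longrightarrow>
        (norm (gx x1 y1 - gx x2 y2))\<^sup>2 + (norm (gy x1 y1 - gy x2 y2))\<^sup>2
          \<le> L\<^sup>2 * ((norm (x1 - x2))\<^sup>2 + (norm (y1 - y2))\<^sup>2)"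
    and mu_pos: "\<mu> > 0"
    and strongly_concave: "\<And>x. x \<in> X \<Longrightarrow> strongly_concave_on \<mu> Y (f x)"
begin

abbreviation \<kappa> :: real where "\<kappa> \<equiv> L / \<mu>"

lemma partial_gradients_lipschitz_in_y:
  assumes "x \<in> X" "y1 \<in> Y" "y2 \<in> Y"
  shows "norm (gx x y1 - gx x y2) \<le> L * norm (y1 - y2)"
    and "norm (gy x y1 - gy x y2) \<le> L * norm (y1 - y2)"
proof -
  have sum: "(norm (gx x y1 - gx x y2))\<^sup>2 + (norm (gy x y1 - gy x y2))\<^sup>2 \<le> (L * norm (y1 - y2))\<^sup>2"
    using smooth[OF assms(1,2) assms(1,3)] by (simp add: power_mult_distrib)
  have "0 \<le> L * norm (y1 - y2)" using L_pos by simp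
  then show "norm (gx x y1 - gx x y2) \<le> L * norm (y1 - y2)"
    and "norm (gy x y1 - gy x y2) \<le> L * norm (y1 - y2)"
    using sum by (smt (verit) power2_le_imp_le zero_le_power2)+
qed

lemma f_has_real_derivative_along_line:
  assumes "x + t *\<^sub>R dx \<in> X" "y + t *\<^sub>R dy \<in> Y"
  shows "((\<lambda>s. f (x + s *\<^sub>R dx) (y + s *\<^sub>R dy)) has_real_derivative
      inner (gx (x + t *\<^sub>R dx) (y + t *\<^sub>R dy)) dx + inner (gy (x + t *\<^sub>R dx) (y + t *\<^sub>R dy)) dy) (at t)"
  by (rule has_real_derivative_along_line[OF gradient[OF assms]])
    (auto intro: bounded_linear.linear bounded_linear_inner_right)

lemma mixed_difference_le:
  assumes "x \<in> X" "x' \<in> X" "y1 \<in> Y" "y2 \<in> Y"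
  shows "(f x' y1 - f x y1) - (f x' y2 - f x y2) \<le> L * norm (y1 - y2) * norm (x' - x)"
proof -
  define p where "p s = x + s *\<^sub>R (x' - x)" for s
  have p_mem: "p s \<in> X" if "0 \<le> s" "s \<le> 1" for s
    using convexD_alt[OF convex_X assms(1,2) that] unfolding p_def by (simp add: algebra_simps)
  have deriv: "((\<lambda>s. f (p s) y) has_real_derivative inner (gx (p s) y) (x' - x)) (at s)"
    if "0 \<le> s" "s \<le> 1" "y \<in> Y" for s y
    using f_has_real_derivative_along_line[of x s "x' - x" y 0] p_mem that
    unfolding p_def by simp
  have "((\<lambda>s. f (p s) y1 - f (p s) y2) has_real_derivative
      inner (gx (p s) y1) (x' - x) - inner (gx (p s) y2) (x' - x)) (at s)"
    if "0 \<le> s" "s \<le> 1" for s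
    using deriv[OF that assms(3)] deriv[OF that assms(4)] by (rule DERIV_diff)
  then obtain \<xi> where \<xi>: "0 < \<xi>" "\<xi> < 1"
    and mvt: "(f (p 1) y1 - f (p 1) y2) - (f (p 0) y1 - f (p 0) y2)
      = (1 - 0) * (inner (gx (p \<xi>) y1) (x' - x) - inner (gx (p \<xi>) y2) (x' - x))"
    using MVT2[of 0 1 "\<lambda>s. f (p s) y1 - f (p s) y2"
        "\<lambda>s. inner (gx (p s) y1) (x' - x) - inner (gx (p s) y2) (x' - x)"] by auto
  have "inner (gx (p \<xi>) y1) (x' - x) - inner (gx (p \<xi>) y2) (x' - x)
      = inner (gx (p \<xi>) y1 - gx (p \<xi>) y2) (x' - x)"
    by (simp add: inner_diff_left)
  also have "\<dots> \<le> norm (gx (p \<xi>) y1 - gx (p \<xi>) y2) * norm (x' - x)"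
    by (rule norm_cauchy_schwarz)
  also have "\<dots> \<le> L * norm (y1 - y2) * norm (x' - x)"
    using partial_gradients_lipschitz_in_y(1)[OF p_mem assms(3,4)] \<xi> by (intro mult_right_mono) auto
  finally show ?thesis using mvt unfolding p_def by (simp add: algebra_simps)
qed

text \<open>The directional derivative of \<open>f x\<close> along \<open>y\<^sub>2 - y\<^sub>1\<close> varies by at most
  \<open>L \<parallel>y\<^sub>2 - y\<^sub>1\<parallel>\<^sup>2\<close> on the segment, so comparing the two halves of the segment
  against the strong-concavity gain at the midpoint forces \<open>\<mu> \<le> 2 L\<close>.\<close>
lemma strong_concavity_le_twice_smoothness:
  assumes "x \<in> X" "y1 \<in> Y" "y2 \<in> Y" "y1 \<noteq> y2"
  shows "\<mu> \<le> 2 * L"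
proof -
  define w where "w = y2 - y1"
  define q where "q s = y1 + s *\<^sub>R w" for s
  have q_mem: "q s \<in> Y" if "0 \<le> s" "s \<le> 1" for s
    using convexD_alt[OF convex_Y assms(2,3) that] unfolding q_def w_def by (simp add: algebra_simps)
  define h' where "h' s = inner (gy x (q s)) w" for s
  have deriv: "((\<lambda>s. f x (q s)) has_real_derivative h' s) (at s)" if "0 \<le> s" "s \<le> 1" for s
    using f_has_real_derivative_along_line[of x s 0 y1 w] q_mem[OF that] assms(1)
    unfolding q_def h'_def by simp
  obtain \<xi>1 where \<xi>1: "0 < \<xi>1" "\<xi>1 < 1/2" "f x (q (1/2)) - f x (q 0) = (1/2 - 0) * h' \<xi>1"
    using MVT2[of 0 "1/2" "\<lambda>s. f x (q s)" h'] deriv by auto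
  obtain \<xi>2 where \<xi>2: "1/2 < \<xi>2" "\<xi>2 < 1" "f x (q 1) - f x (q (1/2)) = (1 - 1/2) * h' \<xi>2"
    using MVT2[of "1/2" 1 "\<lambda>s. f x (q s)" h'] deriv by auto
  have "h' \<xi>1 - h' \<xi>2 = inner (gy x (q \<xi>1) - gy x (q \<xi>2)) w"
    unfolding h'_def by (simp add: inner_diff_left)
  also have "\<dots> \<le> norm (gy x (q \<xi>1) - gy x (q \<xi>2)) * norm w"
    by (rule norm_cauchy_schwarz)
  also have "\<dots> \<le> L * norm (q \<xi>1 - q \<xi>2) * norm w"
    using partial_gradients_lipschitz_in_y(2)[OF assms(1) q_mem q_mem] \<xi>1 \<xi>2
    by (intro mult_right_mono) auto
  also have "\<dots> = L * (\<xi>2 - \<xi>1) * (norm w)\<^sup>2"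
    using \<xi>1 \<xi>2 unfolding q_def
    by (simp add: power2_eq_square flip: scaleR_diff_left)
  also have "\<dots> \<le> L * (norm w)\<^sup>2"
  proof -
    have "(\<xi>2 - \<xi>1) * (norm w)\<^sup>2 \<le> (norm w)\<^sup>2"
      using \<xi>1 \<xi>2 by (intro mult_left_le_one_le) auto
    then show ?thesis using L_pos by (simp add: mult.assoc)
  qed
  finally have slope_change: "h' \<xi>1 - h' \<xi>2 \<le> L * (norm w)\<^sup>2" .
  have "q 0 = y1" "q 1 = y2" "norm (y1 - y2) = norm w"
    unfolding q_def w_def by (auto simp: norm_minus_commute)
  moreover have "(1/2) *\<^sub>R (y1 + y2) = q (1/2)"
    unfolding q_def w_def by (simp add: algebra_simps flip: scaleR_add_left)
  ultimately have "(f x y1 + f x y2) / 2 + \<mu> * (norm w)\<^sup>2 / 8 \<le> f x (q (1/2))"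
    "f x (q (1/2)) - f x y1 = h' \<xi>1 / 2" "f x y2 - f x (q (1/2)) = h' \<xi>2 / 2"
    using strongly_concave_on_midpoint[OF strongly_concave[OF assms(1)] assms(2,3)] \<xi>1(3) \<xi>2(3)
    by simp_all
  then have "\<mu> * (norm w)\<^sup>2 \<le> 2 * (L * (norm w)\<^sup>2)"
    using slope_change by (simp add: field_simps)
  moreover have "(norm w)\<^sup>2 > 0" using assms(4) unfolding w_def by simp
  ultimately show ?thesis by (simp add: mult.assoc[symmetric])
qed

lemma continuous_on_f_in_y:
  assumes "x \<in> X"
  shows "continuous_on Y (f x)"
proof (rule continuous_at_imp_continuous_on, intro ballI)
  fix y assume "y \<in> Y"
  then have "isCont (\<lambda>(a, b). f a b) (x, y)"
    using has_derivative_continuous[OF gradient[OF assms]] by blast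
  then show "isCont (f x) y"
    using isCont_o2[of y "\<lambda>b. (x, b)" "\<lambda>(a, b). f a b"] by simp
qed

definition best_response :: "'a \<Rightarrow> 'b" where
  "best_response x = (SOME y. y \<in> Y \<and> (\<forall>y'\<in>Y. f x y' \<le> f x y))"

lemma best_response_maximizer:
  assumes "x \<in> X"
  shows "best_response x \<in> Y" and "\<And>y. y \<in> Y \<Longrightarrow> f x y \<le> f x (best_response x)"
proof -
  have "\<exists>y\<in>Y. \<forall>y'\<in>Y. f x y' \<le> f x y"
    using continuous_attains_sup[OF compact_Y nonempty_Y continuous_on_f_in_y[OF assms]] .
  then have "best_response x \<in> Y \<and> (\<forall>y'\<in>Y. f x y' \<le> f x (best_response x))"
    unfolding best_response_def by (rule someI2_bex) auto
  then show "best_response x \<in> Y" and "\<And>y. y \<in> Y \<Longrightarrow> f x y \<le> f x (best_response x)"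
    by auto
qed

lemma SUP_eq_best_response:
  assumes "x \<in> X"
  shows "(SUP y\<in>Y. f x y) = f x (best_response x)"
  using best_response_maximizer[OF assms] by (intro cSup_eq_maximum) auto

lemma best_response_quadratic_growth:
  assumes "x \<in> X" "y \<in> Y"
  shows "\<mu> / 2 * (norm (y - best_response x))\<^sup>2 \<le> f x (best_response x) - f x y"
  using strongly_concave_on_quadratic_growth[OF strongly_concave[OF assms(1)] convex_Y]
    best_response_maximizer[OF assms(1)] assms(2) by blast

text \<open>Quadratic growth at both best responses, added up, is bounded by the mixed difference.\<close>
lemma best_response_lipschitz:
  assumes "x \<in> X" "x' \<in> X"
  shows "norm (best_response x' - best_response x) \<le> \<kappa> * norm (x' - x)"
proof -
  define d where "d = norm (best_response x' - best_response x)"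
  note br = best_response_maximizer(1)[OF assms(1)] best_response_maximizer(1)[OF assms(2)]
  have "\<mu> / 2 * d\<^sup>2 \<le> f x (best_response x) - f x (best_response x')"
    using best_response_quadratic_growth[OF assms(1) br(2)] unfolding d_def .
  moreover have "\<mu> / 2 * d\<^sup>2 \<le> f x' (best_response x') - f x' (best_response x)"
    using best_response_quadratic_growth[OF assms(2) br(1)] unfolding d_def
    by (simp add: norm_minus_commute)
  moreover have "(f x' (best_response x') - f x (best_response x'))
      - (f x' (best_response x) - f x (best_response x)) \<le> L * d * norm (x' - x)"
    using mixed_difference_le[OF assms br(2,1)] unfolding d_def .
  ultimately have "d * (\<mu> * d) \<le> d * (L * norm (x' - x))"
    by (simp add: power2_eq_square algebra_simps)
  then have "\<mu> * d \<le> L * norm (x' - x)"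
    using L_pos by (cases "d = 0") (auto simp: d_def)
  then show ?thesis unfolding d_def using mu_pos by (simp add: field_simps)
qed

lemma approx_best_response_near:
  assumes "x \<in> X" "y \<in> Y" "f x y \<ge> (SUP y\<in>Y. f x y) - e"
  shows "norm (y - best_response x) \<le> sqrt (2 * e / \<mu>)"
proof (rule real_le_rsqrt)
  have "\<mu> / 2 * (norm (y - best_response x))\<^sup>2 \<le> e"
    using best_response_quadratic_growth[OF assms(1,2)] assms(3) SUP_eq_best_response[OF assms(1)]
    by simp
  then show "(norm (y - best_response x))\<^sup>2 \<le> 2 * e / \<mu>"
    using mu_pos by (simp add: field_simps)
qed

text \<open>The loss \<open>L \<delta> \<parallel>y\<^sup>*(x') - y\<parallel>\<close> from the mixed difference is absorbed, via Young's
  inequality, by the quadratic growth term \<open>\<mu> s\<^sup>2 / 2\<close> (\<open>s = \<parallel>y\<^sup>*(x') - y\<^sup>*(x)\<parallel>\<close>) and by \<open>e\<close>.\<close>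
lemma approx_best_response_gap_after_move:
  assumes "x \<in> X" "x' \<in> X" "y \<in> Y" "f x y \<ge> (SUP y\<in>Y. f x y) - e"
  shows "(SUP y\<in>Y. f x' y) - f x' y \<le> 6 * e + 3/5 * (\<kappa> * L * (norm (x' - x))\<^sup>2)"
proof -
  define \<delta> where "\<delta> = norm (x' - x)"
  define s where "s = norm (best_response x' - best_response x)"
  define q where "q = sqrt (2 * e / \<mu>)"
  note br = best_response_maximizer(1)[OF assms(1)] best_response_maximizer(1)[OF assms(2)]
  have near: "norm (y - best_response x) \<le> q"
    unfolding q_def by (rule approx_best_response_near[OF assms(1,3,4)])
  then have "q \<ge> 0" by (rule order_trans[rotated]) simp
  then have e_eq: "e = \<mu> * q\<^sup>2 / 2"
    using near assms(1,3,4) best_response_quadratic_growth[OF assms(1,3)] mu_pos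
    unfolding q_def by (simp add: SUP_eq_best_response)
  have mixed: "(f x' (best_response x') - f x (best_response x')) - (f x' y - f x y)
      \<le> L * norm (best_response x' - y) * \<delta>"
    using mixed_difference_le[OF assms(1,2) br(2) assms(3)] unfolding \<delta>_def .
  have "norm (best_response x' - y) \<le> s + q"
    using norm_diff_triangle_le[OF order.refl near[unfolded norm_minus_commute[of y]]]
    unfolding s_def .
  then have "L * norm (best_response x' - y) * \<delta> \<le> L * (s + q) * \<delta>"
    using L_pos unfolding \<delta>_def by (intro mult_right_mono mult_left_mono) auto
  then have "L * norm (best_response x' - y) * \<delta> \<le> L * \<delta> * s + L * \<delta> * q"
    by (simp add: algebra_simps)
  moreover have "\<mu> / 2 * s\<^sup>2 \<le> f x (best_response x) - f x (best_response x')"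
    using best_response_quadratic_growth[OF assms(1) br(2)] unfolding s_def .
  moreover have "f x (best_response x) - f x y \<le> e"
    using assms(4) SUP_eq_best_response[OF assms(1)] by simp
  ultimately have "(SUP y\<in>Y. f x' y) - f x' y \<le> L * \<delta> * s + L * \<delta> * q - \<mu> / 2 * s\<^sup>2 + e"
    using mixed unfolding SUP_eq_best_response[OF assms(2)] by linarith
  also have "\<dots> \<le> 6 * e + 3/5 * (\<kappa> * L * \<delta>\<^sup>2)"
  proof -
    have "L * \<delta> * s \<le> (L * \<delta>)\<^sup>2 / (2 * \<mu>) + \<mu> * s\<^sup>2 / 2"
      "L * \<delta> * q \<le> (L * \<delta>)\<^sup>2 / (2 * (5 * \<mu>)) + 5 * \<mu> * q\<^sup>2 / 2"
      by (rule mult_le_young; use mu_pos in simp)+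
    then have "L * \<delta> * s \<le> \<kappa> * L * \<delta>\<^sup>2 / 2 + \<mu> / 2 * s\<^sup>2"
      "L * \<delta> * q \<le> \<kappa> * L * \<delta>\<^sup>2 / 10 + 5 * e"
      unfolding e_eq by (simp_all add: power2_eq_square mult_ac)
    then show ?thesis by linarith
  qed
  finally show ?thesis unfolding \<delta>_def .
qed

lemma prox_iterate_move_contraction:
  assumes "x0 \<in> X" "x1 \<in> X" "y1 \<in> Y" "y2 \<in> Y"
    and "f x0 y1 \<ge> (SUP y\<in>Y. f x0 y) - e" "f x1 y2 \<ge> (SUP y\<in>Y. f x1 y) - e"
    and "cndg_output (gx z y1) v \<alpha> \<zeta> X v1" "cndg_output (gx z y2) v \<alpha> \<zeta> X v2"
    and "z \<in> X" "v \<in> X" "\<alpha> > 0" "\<zeta> > 0" "\<gamma> \<ge> 0"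
  shows "\<gamma> * norm (v2 - v1)
    \<le> \<gamma> * L * \<kappa> / \<alpha> * norm (x1 - x0) + \<gamma> * (2 * L * sqrt (2 * e / \<mu>) / \<alpha> + sqrt (2 * \<zeta> / \<alpha>))"
proof -
  define q where "q = sqrt (2 * e / \<mu>)"
  have "norm (y2 - y1)
      \<le> norm (y2 - best_response x1) + norm (best_response x1 - best_response x0)
        + norm (best_response x0 - y1)"
    by (rule norm_diff_triangle_le[OF norm_diff_triangle_le[OF order.refl order.refl] order.refl])
  also have "\<dots> \<le> q + \<kappa> * norm (x1 - x0) + q"
    using approx_best_response_near[OF assms(2,4,6)] best_response_lipschitz[OF assms(1,2)]
      approx_best_response_near[OF assms(1,3,5)]
    unfolding q_def by (simp add: norm_minus_commute add_mono)
  finally have y_move: "norm (y2 - y1) \<le> \<kappa> * norm (x1 - x0) + 2 * q" by simp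
  have "norm (v2 - v1) \<le> norm (gx z y2 - gx z y1) / \<alpha> + sqrt (2 * \<zeta> / \<alpha>)"
    by (rule cndg_outputs_close[OF assms(8,7) convex_X assms(10-12)])
  also have "\<dots> \<le> L * (\<kappa> * norm (x1 - x0) + 2 * q) / \<alpha> + sqrt (2 * \<zeta> / \<alpha>)"
    using partial_gradients_lipschitz_in_y(1)[OF assms(9,4,3)] y_move L_pos assms(11)
    by (intro add_right_mono divide_right_mono order_trans[OF _ mult_left_mono[OF y_move]]) auto
  finally have "\<gamma> * norm (v2 - v1)
      \<le> \<gamma> * (L * (\<kappa> * norm (x1 - x0) + 2 * q) / \<alpha> + sqrt (2 * \<zeta> / \<alpha>))"
    using assms(13) by (rule mult_left_mono)
  then show ?thesis
    using assms(11) mu_pos unfolding q_def by (simp add: field_simps)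
qed

lemma prox_step_output_last_move:
  fixes \<gamma> \<alpha> \<zeta> \<epsilon> e a c :: real
  assumes e_def: "e = \<epsilon> / (64 * \<kappa>)"
    and a_def: "a = sqrt (2 * \<kappa> * L * e / \<alpha>\<^sup>2)" and c_def: "c = sqrt (2 * \<zeta> / \<alpha>)"
    and run: "prox_step_output X Y f gx L \<mu> xh z v \<gamma> \<alpha> \<zeta> \<epsilon> (xR, yR, vR)"
    and "bounded X" "xh \<in> X" "z \<in> X" "v \<in> X"
    and "0 < \<gamma>" "\<gamma> \<le> 1" "\<alpha> > 0" "\<zeta> > 0" "\<epsilon> \<ge> 0" "2 * \<gamma> * L * \<kappa> \<le> \<alpha>"
  obtains x where "x \<in> X" "xR \<in> X" "yR \<in> Y" "f x yR \<ge> (SUP y\<in>Y. f x y) - e"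
    and "norm (xR - x) \<le> 2 * \<gamma> * sqrt (a\<^sup>2 + c\<^sup>2) + 2 * \<gamma> * (2 * a + c)"
proof -
  obtain R xs ys vs where R: "R = nat \<lceil>log 2 (4 * diameter X / (4 * \<gamma> *
      sqrt (2 * \<kappa> * L * e / \<alpha>\<^sup>2 + 2 * \<zeta> / \<alpha>)))\<rceil>" "1 \<le> R"
    and out: "xR = xs R" "yR = ys R"
    and ys_mem: "\<And>r. 1 \<le> r \<Longrightarrow> r \<le> R \<Longrightarrow> ys r \<in> Y"
    and ys_approx: "\<And>r. 1 \<le> r \<Longrightarrow> r \<le> R \<Longrightarrow> f (xs (r - 1)) (ys r) \<ge> (SUP y\<in>Y. f (xs (r - 1)) y) - e"
    and vs_cndg: "\<And>r. 1 \<le> r \<Longrightarrow> r \<le> R \<Longrightarrow> cndg_output (gx z (ys r)) v \<alpha> \<zeta> X (vs r)"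
    and xs_eq: "\<And>r. 1 \<le> r \<Longrightarrow> r \<le> R \<Longrightarrow> xs r = (1 - \<gamma>) *\<^sub>R xh + \<gamma> *\<^sub>R vs r"
    and xs_mem: "\<And>r. r \<le> R \<Longrightarrow> xs r \<in> X"
    using prox_step_output_iterates[OF run convex_X \<open>xh \<in> X\<close> \<open>v \<in> X\<close> \<open>0 < \<gamma>\<close> \<open>\<gamma> \<le> 1\<close>
        \<open>\<alpha> > 0\<close> \<open>\<zeta> > 0\<close>]
    unfolding e_def[symmetric] by blast
  have "e \<ge> 0" unfolding e_def using L_pos mu_pos \<open>\<epsilon> \<ge> 0\<close> by simp
  then have "a \<ge> 0" and a_sq: "a\<^sup>2 = 2 * \<kappa> * L * e / \<alpha>\<^sup>2"
    unfolding a_def using mu_pos L_pos by simp_all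
  have "c > 0" and c_sq: "c\<^sup>2 = 2 * \<zeta> / \<alpha>"
    unfolding c_def using \<open>\<alpha> > 0\<close> \<open>\<zeta> > 0\<close> by simp_all
  have a_eq: "L * sqrt (2 * e / \<mu>) / \<alpha> = a"
  proof -
    have "2 * \<kappa> * L * e / \<alpha>\<^sup>2 = (L / \<alpha>)\<^sup>2 * (2 * e / \<mu>)"
      by (simp add: power2_eq_square mult_ac)
    moreover have "sqrt ((L / \<alpha>)\<^sup>2 * (2 * e / \<mu>)) = L / \<alpha> * sqrt (2 * e / \<mu>)"
      using L_pos \<open>\<alpha> > 0\<close> by (subst real_sqrt_mult) simp
    ultimately show ?thesis unfolding a_def by simp
  qed
  define d where "d r = norm (xs r - xs (r - 1))" for r
  have d_rec: "d (Suc r) \<le> 1/2 * d r + \<gamma> * (2 * a + c)" if "1 \<le> r" "r < R" for r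
  proof -
    have "xs (Suc r) - xs r
        = ((1 - \<gamma>) *\<^sub>R xh + \<gamma> *\<^sub>R vs (Suc r)) - ((1 - \<gamma>) *\<^sub>R xh + \<gamma> *\<^sub>R vs r)"
      using xs_eq that by simp
    then have "d (Suc r) = \<gamma> * norm (vs (Suc r) - vs r)"
      unfolding d_def using \<open>0 < \<gamma>\<close> by (simp add: algebra_simps flip: scaleR_diff_right)
    also have "\<dots> \<le> \<gamma> * L * \<kappa> / \<alpha> * d r + \<gamma> * (2 * L * sqrt (2 * e / \<mu>) / \<alpha> + c)"
      using prox_iterate_move_contraction[OF xs_mem xs_mem ys_mem ys_mem ys_approx ys_approx
          vs_cndg vs_cndg \<open>z \<in> X\<close> \<open>v \<in> X\<close> \<open>\<alpha> > 0\<close> \<open>\<zeta> > 0\<close>, of r "Suc r" \<gamma>]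
        that \<open>0 < \<gamma>\<close>
      unfolding d_def c_def by simp
    also have "\<dots> = \<gamma> * L * \<kappa> / \<alpha> * d r + \<gamma> * (2 * a + c)"
      unfolding a_eq[symmetric] by simp
    also have "\<dots> \<le> 1/2 * d r + \<gamma> * (2 * a + c)"
      using \<open>2 * \<gamma> * L * \<kappa> \<le> \<alpha>\<close> \<open>\<alpha> > 0\<close> mu_pos unfolding d_def
      by (intro add_right_mono mult_right_mono) (auto simp: field_simps)
    finally show ?thesis .
  qed
  have "d 1 \<le> diameter X"
    using diameter_bounded_bound[OF \<open>bounded X\<close> xs_mem xs_mem, of 1 0] \<open>1 \<le> R\<close>
    unfolding d_def by (simp add: dist_norm)
  then have "d R \<le> (1/2) ^ (R - 1) * diameter X + \<gamma> * (2 * a + c) / (1 - 1/2)"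
    using d_rec \<open>1 \<le> R\<close> \<open>0 < \<gamma>\<close> \<open>a \<ge> 0\<close> \<open>c > 0\<close>
    by (intro geometric_recursion_bound) auto
  moreover have "4 * \<gamma> * sqrt (a\<^sup>2 + c\<^sup>2) > 0"
    using \<open>c > 0\<close> \<open>0 < \<gamma>\<close> by (simp add: add_nonneg_pos)
  then have "(1/2) ^ (R - 1) * diameter X \<le> 4 * \<gamma> * sqrt (a\<^sup>2 + c\<^sup>2) / 2"
    using half_power_ceiling_log_le[OF diameter_ge_0[OF \<open>bounded X\<close>] _ \<open>1 \<le> R\<close>] R(1)
    unfolding a_sq c_sq by blast
  ultimately have "norm (xR - xs (R - 1)) \<le> 2 * \<gamma> * sqrt (a\<^sup>2 + c\<^sup>2) + 2 * \<gamma> * (2 * a + c)"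
    unfolding d_def out by simp
  moreover have "xs (R - 1) \<in> X" "xR \<in> X" "yR \<in> Y"
    using xs_mem ys_mem \<open>1 \<le> R\<close> out by auto
  moreover have "f (xs (R - 1)) yR \<ge> (SUP y\<in>Y. f (xs (R - 1)) y) - e"
    using ys_approx \<open>1 \<le> R\<close> out by simp
  ultimately show thesis using that by blast
qed

lemma prox_step_output_gap:
  fixes \<gamma> \<alpha> \<zeta> \<epsilon> e a c :: real
  assumes "e = \<epsilon> / (64 * \<kappa>)"
    and "a = sqrt (2 * \<kappa> * L * e / \<alpha>\<^sup>2)" "c = sqrt (2 * \<zeta> / \<alpha>)"
    and "prox_step_output X Y f gx L \<mu> xh z v \<gamma> \<alpha> \<zeta> \<epsilon> (xR, yR, vR)"
    and "bounded X" "xh \<in> X" "z \<in> X" "v \<in> X"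
    and "0 < \<gamma>" "\<gamma> \<le> 1" "\<alpha> > 0" "\<zeta> > 0" "\<epsilon> \<ge> 0" "2 * \<gamma> * L * \<kappa> \<le> \<alpha>"
  shows "(SUP y\<in>Y. f xR y) - f xR yR
    \<le> 6 * e + 3/5 * (\<kappa> * L * (2 * \<gamma> * sqrt (a\<^sup>2 + c\<^sup>2) + 2 * \<gamma> * (2 * a + c))\<^sup>2)"
proof -
  obtain x where x: "x \<in> X" "xR \<in> X" "yR \<in> Y" "f x yR \<ge> (SUP y\<in>Y. f x y) - e"
    and move: "norm (xR - x) \<le> 2 * \<gamma> * sqrt (a\<^sup>2 + c\<^sup>2) + 2 * \<gamma> * (2 * a + c)"
    by (rule prox_step_output_last_move[OF assms])
  have "(norm (xR - x))\<^sup>2 \<le> (2 * \<gamma> * sqrt (a\<^sup>2 + c\<^sup>2) + 2 * \<gamma> * (2 * a + c))\<^sup>2"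
    using move by (intro power_mono) auto
  then have "\<kappa> * L * (norm (xR - x))\<^sup>2 \<le> \<kappa> * L * (2 * \<gamma> * sqrt (a\<^sup>2 + c\<^sup>2) + 2 * \<gamma> * (2 * a + c))\<^sup>2"
    using L_pos mu_pos by (intro mult_left_mono) auto
  then show ?thesis
    using approx_best_response_gap_after_move[OF x] by simp
qed

lemma prox_step_output_gap_le:
  fixes k :: nat
  assumes run: "prox_step_output X Y f gx L \<mu> xh z v
        (3 / (real k + 2)) (6 * \<kappa> * L / (real k + 1))
        (L * (diameter X)\<^sup>2 / (384 * real k * (real k + 1)))
        (\<kappa> * L * (diameter X)\<^sup>2 / (real k * (real k + 1) * (real k + 2)))
        (xR, yR, vR)"
    and "bounded X" "xh \<in> X" "z \<in> X" "v \<in> X" "k \<ge> 1" "\<kappa> \<ge> 1/2"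
  shows "(SUP y\<in>Y. f xR y) - f xR yR \<le> \<kappa> * L * (diameter X)\<^sup>2 / (real k * (real k + 1) * (real k + 2))"
proof -
  have "diameter X > 0"
    using diameter_ge_0[OF \<open>bounded X\<close>] prox_step_output_diameter_nonzero[OF run] by simp
  have "2 * (3 / (real k + 2)) * L * \<kappa> = 6 * \<kappa> * L / (real k + 2)" by simp
  also have "\<dots> \<le> 6 * \<kappa> * L / (real k + 1)"
    using L_pos mu_pos by (intro divide_left_mono) auto
  finally have step_size: "2 * (3 / (real k + 2)) * L * \<kappa> \<le> 6 * \<kappa> * L / (real k + 1)" .
  have params: "0 < 3 / (real k + 2)" "3 / (real k + 2) \<le> 1" "0 < 6 * \<kappa> * L / (real k + 1)"
    "0 < L * (diameter X)\<^sup>2 / (384 * real k * (real k + 1))"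
    "0 \<le> \<kappa> * L * (diameter X)\<^sup>2 / (real k * (real k + 1) * (real k + 2))"
    using \<open>k \<ge> 1\<close> L_pos mu_pos \<open>diameter X > 0\<close> by auto
  have "1 \<le> real k" using \<open>k \<ge> 1\<close> by simp
  show ?thesis
    by (rule order_trans[OF prox_step_output_gap[OF refl refl refl run assms(2-5) params step_size]
        prox_step_parameters_gap_le[OF \<open>1 \<le> real k\<close> \<open>\<kappa> \<ge> 1/2\<close> L_pos refl refl refl refl refl refl refl]])
qed

end

theorem lemma3:
  fixes X :: "'a::euclidean_space set" and Y :: "'b::euclidean_space set"
    and f :: "'a \<Rightarrow> 'b \<Rightarrow> real" and gx :: "'a \<Rightarrow> 'b \<Rightarrow> 'a" and gy :: "'a \<Rightarrow> 'b \<Rightarrow> 'b"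
    and U :: "('a \<times> 'b) set"
    and L \<mu> :: real and k :: nat and xh z v :: 'a
    and xR :: 'a and yR :: 'b and vR :: 'a
  assumes X: "convex X" "compact X" "X \<noteq> {}"
    and Y: "convex Y" "compact Y" "Y \<noteq> {}"
    and U: "open U" "X \<times> Y \<subseteq> U"
    and grad: "\<And>x y. (x, y) \<in> U \<Longrightarrow>
        ((\<lambda>(a, b). f a b) has_derivative (\<lambda>(h, l). inner (gx x y) h + inner (gy x y) l)) (at (x, y))"
    and grad_cont: "continuous_on U (\<lambda>(x, y). (gx x y, gy x y))"
    and L_pos: "L > 0"
    and smooth: "\<And>x1 y1 x2 y2. x1 \<in> X \<Longrightarrow> y1 \<in> Y \<Longrightarrow> x2 \<in> X \<Longrightarrow> y2 \<in> Y \<Longrightarrow>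
        (norm (gx x1 y1 - gx x2 y2))\<^sup>2 + (norm (gy x1 y1 - gy x2 y2))\<^sup>2
          \<le> L\<^sup>2 * ((norm (x1 - x2))\<^sup>2 + (norm (y1 - y2))\<^sup>2)"
    and cvx: "\<And>y. y \<in> Y \<Longrightarrow> convex_on X (\<lambda>x. f x y)"
    and mu_pos: "\<mu> > 0"
    and scv: "\<And>x. x \<in> X \<Longrightarrow> strongly_concave_on \<mu> Y (f x)"
    and k: "k \<ge> 1"
    and pts: "xh \<in> X" "z \<in> X" "v \<in> X"
    and run: "prox_step_output X Y f gx L \<mu> xh z v
        (3 / (real k + 2))
        (6 * (L / \<mu>) * L / (real k + 1))
        (L * (diameter X)\<^sup>2 / (384 * real k * (real k + 1)))
        ((L / \<mu>) * L * (diameter X)\<^sup>2 / (real k * (real k + 1) * (real k + 2)))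
        (xR, yR, vR)"
  shows "f xR yR \<ge> (SUP y\<in>Y. f xR y) - (L / \<mu>) * L * (diameter X)\<^sup>2 / (real k * (real k + 1) * (real k + 2))"
proof -
  interpret smooth_strongly_concave X Y f gx gy L \<mu>
  proof unfold_locales
    fix x y assume "x \<in> X" "y \<in> Y"
    then show "((\<lambda>(a, b). f a b) has_derivative (\<lambda>(h, l). inner (gx x y) h + inner (gy x y) l)) (at (x, y))"
      using grad U(2) by blast
  qed (fact X(1) Y L_pos smooth mu_pos scv)+
  have "yR \<in> Y" by (rule prox_step_output_y_mem[OF run])
  show ?thesis
  proof (cases "Y = {yR}")
    case True
    then show ?thesis using L_pos mu_pos by simp
  next
    case False
    then obtain y where "y \<in> Y" "y \<noteq> yR" using \<open>yR \<in> Y\<close> by blast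
    then have "\<kappa> \<ge> 1/2"
      using strong_concavity_le_twice_smoothness[OF pts(1) _ \<open>yR \<in> Y\<close>] mu_pos by (simp add: field_simps)
    then show ?thesis
      using prox_step_output_gap_le[OF run compact_imp_bounded[OF X(2)] pts k] by simp
  qed
qed

end
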